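(* In the construction below, every $E^*\subseteq E$ with $|E^*| > st+2k$ satisfies $\alpha(E^* ) < A$; in particular, no such $E^*$ is an admissible solution of the constructed CSCN instance.
   Context: Let $G'=(V',E')$ be a connected undirected graph, let $S=\{u_1,\dots,u_s\}\subseteq V'$ with $s=|S|$, and let $k\ge 0$ be a real number with $|E'|\ge 2k$. Let $t\ge 1$ be an integer. Let $V = V'\cup\{v_{i,j} : 1\le i\le s,\ 1\le j\le t\}$ (the $v_{i,j}$ are new vertices) and let $E$ be the set of all pairs of vertices of $V$ (edges undirected). Define $w^*:E\to\mathbb{R}$ by: $w^*(\{v_{i,j},u_i\})=1$ for all $i,j$; $w^*(\{v_{i,j},u\})=0$ for every $u\in V\setminus\{u_i\}$; $w^*(e)=\frac12$ for every $e\in E'$; $w^*(\{u,u'\})=0$ for $u,u'\in V'$ with $\{u,u'\}\notin E'$. Set $A=\frac{st+k}{st+2k}$ and $B=\frac{\frac12(|E'|-2k)}{st+2k}$. For nonempty $E^*\subseteq E$ let $\alpha(E^* )=\frac{\sum_{e\in E^*}w^*(e)}{|E^*|}$ and $\beta(E^* )=\frac{\sum_{e\in E\setminus E^*}w^*(e)}{|E^*|}$. The graph induced by $E^*$ has vertex set the vertices incident to some edge of $E^*$ and edge set $E^*$. An admissible solution of the constructed CSCN instance is a nonempty $E^*\subseteq E$ whose induced graph is connected and which satisfies $\alpha(E^* )\ge A$ and $\beta(E^* )\le B$. *)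

theory Defs
  imports Complex_Main
begin

definition all_pairs :: "'v set \<Rightarrow> 'v set set" where
  "all_pairs V = {e. e \<subseteq> V \<and> card e = 2}"

definition edge_rel :: "'v set set \<Rightarrow> ('v \<times> 'v) set" where
  "edge_rel E = {(x, y). {x, y} \<in> E}"

definition connected_graph :: "'v set \<Rightarrow> 'v set set \<Rightarrow> bool" where
  "connected_graph V E \<longleftrightarrow> finite V \<and> V \<noteq> {} \<and> E \<subseteq> all_pairs V \<and>
     (\<forall>x\<in>V. \<forall>y\<in>V. (x, y) \<in> (edge_rel E)\<^sup>*)"

definition induced_connected :: "'v set set \<Rightarrow> bool" where
  "induced_connected Es \<longleftrightarrow> connected_graph (\<Union> Es) Es"

text \<open>Constructed vertex set: V' (tagged Inl) plus new vertices v_{i,j} = Inr (i,j).\<close>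
definition newV :: "nat \<Rightarrow> nat \<Rightarrow> ('a + nat \<times> nat) set" where
  "newV s t = {Inr (i, j) | i j. 1 \<le> i \<and> i \<le> s \<and> 1 \<le> j \<and> j \<le> t}"

definition cV :: "'a set \<Rightarrow> nat \<Rightarrow> nat \<Rightarrow> ('a + nat \<times> nat) set" where
  "cV V' s t = Inl ` V' \<union> newV s t"

definition cE :: "'a set \<Rightarrow> nat \<Rightarrow> nat \<Rightarrow> ('a + nat \<times> nat) set set" where
  "cE V' s t = all_pairs (cV V' s t)"

definition wstar :: "'a set set \<Rightarrow> (nat \<Rightarrow> 'a) \<Rightarrow> nat \<Rightarrow> nat \<Rightarrow> ('a + nat \<times> nat) set \<Rightarrow> real" where
  "wstar E' u s t e =
     (if \<exists>i j. 1 \<le> i \<and> i \<le> s \<and> 1 \<le> j \<and> j \<le> t \<and> e = {Inr (i, j), Inl (u i)} then 1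
      else if e \<in> (\<lambda>f. Inl ` f) ` E' then 1/2 else 0)"

definition alpha :: "'a set set \<Rightarrow> (nat \<Rightarrow> 'a) \<Rightarrow> nat \<Rightarrow> nat \<Rightarrow> ('a + nat \<times> nat) set set \<Rightarrow> real" where
  "alpha E' u s t Es = (\<Sum>e\<in>Es. wstar E' u s t e) / real (card Es)"

definition beta :: "'a set \<Rightarrow> 'a set set \<Rightarrow> (nat \<Rightarrow> 'a) \<Rightarrow> nat \<Rightarrow> nat \<Rightarrow> ('a + nat \<times> nat) set set \<Rightarrow> real" where
  "beta V' E' u s t Es = (\<Sum>e\<in>cE V' s t - Es. wstar E' u s t e) / real (card Es)"

definition A_thr :: "nat \<Rightarrow> nat \<Rightarrow> real \<Rightarrow> real" where
  "A_thr s t k = (real (s * t) + k) / (real (s * t) + 2 * k)"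

definition B_thr :: "'a set set \<Rightarrow> nat \<Rightarrow> nat \<Rightarrow> real \<Rightarrow> real" where
  "B_thr E' s t k = ((1/2) * (real (card E') - 2 * k)) / (real (s * t) + 2 * k)"

definition admissible :: "'a set \<Rightarrow> 'a set set \<Rightarrow> (nat \<Rightarrow> 'a) \<Rightarrow> nat \<Rightarrow> nat \<Rightarrow> real \<Rightarrow> ('a + nat \<times> nat) set set \<Rightarrow> bool" where
  "admissible V' E' u s t k Es \<longleftrightarrow> Es \<noteq> {} \<and> Es \<subseteq> cE V' s t \<and> induced_connected Es \<and>
     alpha E' u s t Es \<ge> A_thr s t k \<and> beta V' E' u s t Es \<le> B_thr E' s t k"

end

theory Submission
  imports Defs
begin

text \<open>Only the s t edges {v_{i,j}, u_i} have weight 1; all other edges weigh at most 1/2.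
  Hence a set of n edges has total weight at most (n + s t)/2, and its average weight
  (n + s t)/(2n) falls below A = (s t + k)/(s t + 2k) exactly when n > s t + 2k.\<close>

definition heavy_edges :: "(nat \<Rightarrow> 'a) \<Rightarrow> nat \<Rightarrow> nat \<Rightarrow> ('a + nat \<times> nat) set set" where
  "heavy_edges u s t = (\<lambda>(i, j). {Inr (i, j), Inl (u i)}) ` ({1..s} \<times> {1..t})"

lemma card_heavy_edges_le: "card (heavy_edges u s t) \<le> s * t"
proof -
  have "card (heavy_edges u s t) \<le> card ({1..s} \<times> {1..t})"
    unfolding heavy_edges_def by (rule card_image_le) simp
  then show ?thesis by (simp add: card_cartesian_product)
qed

lemma wstar_le_heavy: "wstar E' u s t e \<le> (if e \<in> heavy_edges u s t then 1 else 1/2)"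
  unfolding wstar_def heavy_edges_def by (auto simp: image_iff; force)

lemma finite_cE:
  assumes "finite V'"
  shows "finite (cE V' s t)"
proof -
  have "newV s t \<subseteq> Inr ` ({1..s} \<times> {1..t})"
    unfolding newV_def by auto
  then have "finite (cV V' s t)"
    unfolding cV_def using assms finite_subset[of "newV s t"] by auto
  then show ?thesis
    unfolding cE_def all_pairs_def by (rule finite_subset[rotated, OF finite_Pow_iff[THEN iffD2]]) auto
qed

lemma sum_le_half_card_plus_heavy:
  fixes w :: "'e \<Rightarrow> real"
  assumes "finite X" and "\<And>x. x \<in> X \<Longrightarrow> w x \<le> (if x \<in> H then 1 else 1/2)"
    and "card (X \<inter> H) \<le> m"
  shows "(\<Sum>x\<in>X. w x) \<le> (card X + real m) / 2"
proof -
  have "(\<Sum>x\<in>X. w x) \<le> (\<Sum>x\<in>X. if x \<in> H then 1 else 1/2)"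
    using assms(2) by (rule sum_mono)
  also have "\<dots> = card (X \<inter> H) + card (X - H) / 2"
    using assms(1) by (simp add: sum.If_cases Int_commute Diff_eq)
  also have "\<dots> = (card X + real (card (X \<inter> H))) / 2"
    using card_Int_Diff[OF assms(1), of H] by (simp add: field_simps)
  also have "\<dots> \<le> (card X + real m) / 2"
    using assms(3) by simp
  finally show ?thesis .
qed

lemma half_mean_below_threshold:
  fixes n m k :: real
  assumes "m > 0" and "k \<ge> 0" and "n > m + 2 * k"
  shows "(n + m) / 2 / n < (m + k) / (m + 2 * k)"
proof -
  have "m * (m + 2 * k) < m * n"
    using assms by simp
  then have "(n + m) * (m + 2 * k) < 2 * n * (m + k)"
    by (simp add: algebra_simps)
  then show ?thesis
    using assms by (simp add: divide_simps) (simp add: algebra_simps)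
qed

theorem lemma2:
  fixes V' :: "'a set" and E' :: "'a set set" and u :: "nat \<Rightarrow> 'a"
    and s t :: nat and k :: real and Es :: "('a + nat \<times> nat) set set"
  assumes "connected_graph V' E'"
    and "inj_on u {1..s}" and "u ` {1..s} \<subseteq> V'" and "s \<ge> 1"
    and "k \<ge> 0" and "real (card E') \<ge> 2 * k"
    and "t \<ge> 1"
    and "Es \<subseteq> cE V' s t" and "real (card Es) > real (s * t) + 2 * k"
  shows "alpha E' u s t Es < A_thr s t k \<and> \<not> admissible V' E' u s t k Es"
proof -
  have "finite Es"
    using assms(1,8) finite_cE finite_subset unfolding connected_graph_def by blast
  moreover have "card (Es \<inter> heavy_edges u s t) \<le> s * t"
    by (rule le_trans[OF card_mono card_heavy_edges_le]) (auto simp: heavy_edges_def)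
  ultimately have weight: "(\<Sum>e\<in>Es. wstar E' u s t e) \<le> (card Es + real (s * t)) / 2"
    by (rule sum_le_half_card_plus_heavy[OF _ wstar_le_heavy])
  have "real (s * t) > 0"
    using assms(4,7) by simp
  then have "(card Es + real (s * t)) / 2 / card Es < A_thr s t k"
    unfolding A_thr_def using assms(5,9) by (intro half_mean_below_threshold) auto
  moreover have "alpha E' u s t Es \<le> (card Es + real (s * t)) / 2 / card Es"
    unfolding alpha_def using weight by (rule divide_right_mono) simp
  ultimately have "alpha E' u s t Es < A_thr s t k"
    by linarith
  then show ?thesis
    unfolding admissible_def by linarith
qed

end
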